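(* Let $f$ be a real function differentiable on the interval $a\le x\le b$, and let $m,k\in\mathbb{R}$. Then the area of the surface of revolution in $\mathbb{R}^3$ obtained by revolving the graph of $y=f(x)$, $a\le x\le b$, about the line $y=m\,x+k$ is given by $$2\pi\int_a^b \bigl|f(x)-m\,x-k\bigr|\,\sqrt{\frac{1+\bigl[f'(x)\bigr]^2}{1+m^2}}\,dx.$$
   Context: The plane $\mathbb{R}^2$ is regarded as sitting inside $\mathbb{R}^3$, and the surface of revolution is the surface swept out when the graph is rotated through a full turn about the given line (viewed as an axis in $\mathbb{R}^3$). *)

theory Defs
  imports "HOL-Analysis.Analysis"
begin

definition plane_pt :: "real \<Rightarrow> real \<Rightarrow> real^3" where
  "plane_pt x y = vector [x, y, 0]"

text \<open>Rotation by angle t of the point q about the axis through p0 with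
  unit direction u (Rodrigues' rotation formula).\<close>
definition rotate_about :: "real^3 \<Rightarrow> real^3 \<Rightarrow> real \<Rightarrow> real^3 \<Rightarrow> real^3" where
  "rotate_about p0 u t q =
     p0 + cos t *\<^sub>R (q - p0) + sin t *\<^sub>R cross3 u (q - p0)
        + ((1 - cos t) * (u \<bullet> (q - p0))) *\<^sub>R u"

text \<open>The axis y = m x + k of the plane, as a line in R^3: base point and unit direction.\<close>
definition line_point :: "real \<Rightarrow> real \<Rightarrow> real^3" where
  "line_point m k = plane_pt 0 k"

definition line_dir :: "real \<Rightarrow> real^3" where
  "line_dir m = (1 / sqrt (1 + m\<^sup>2)) *\<^sub>R plane_pt 1 m"

definition revolution_surface ::
  "(real \<Rightarrow> real) \<Rightarrow> real \<Rightarrow> real \<Rightarrow> real \<Rightarrow> real \<Rightarrow> real^3" where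
  "revolution_surface f m k x t =
     rotate_about (line_point m k) (line_dir m) t (plane_pt x (f x))"

definition param_surface_area ::
  "(real \<Rightarrow> real \<Rightarrow> real^3) \<Rightarrow> real \<Rightarrow> real \<Rightarrow> real \<Rightarrow> real \<Rightarrow> real" where
  "param_surface_area phi a b c d =
     integral ({a..b} \<times> {c..d})
       (\<lambda>(s, t). norm (cross3
          (vector_derivative (\<lambda>s'. phi s' t) (at s within {a..b}))
          (vector_derivative (\<lambda>t'. phi s t') (at t within {c..d}))))"

end

theory Submission
  imports Defs
begin

(* Points of the plane are written in the orthonormal frame u = line_dir m, v = axis_normal m of the
   axis, and w = u \<times> v. Rodrigues' formula rotates p0 + \<beta> u + \<rho> v into
   p0 + \<beta> u + \<rho> (cos t v + sin t w), so the surface is parametrised by the axial coordinate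
   \<beta>(x) = (x + m (f x - k)) / sqrt (1 + m^2) and the signed distance
   \<rho>(x) = (f x - m x - k) / sqrt (1 + m^2) from the axis. The two partial derivatives are
   orthogonal, of lengths sqrt (\<beta>'^2 + \<rho>'^2) = sqrt (1 + f'^2) and |\<rho>|, so the area element
   does not depend on t and the double integral factors by Tonelli's theorem. As the integrand
   need not be integrable, the factorisation is done for the (possibly infinite) Lebesgue integrals
   of nonnegative Borel functions; this needs the derivative of f within [a,b] to be Borel. *)

lemma rotate_about_cylindrical:
  assumes "u \<bullet> u = 1" "u \<bullet> v = 0"
  shows "rotate_about p0 u t (p0 + \<beta> *\<^sub>R u + \<rho> *\<^sub>R v)
           = p0 + \<beta> *\<^sub>R u + \<rho> *\<^sub>R (cos t *\<^sub>R v + sin t *\<^sub>R cross3 u v)"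
  using assms
  by (simp add: rotate_about_def cross_add_right cross_mult_right inner_add_right algebra_simps)

lemma norm_cross3_orthonormal_frame:
  fixes u v :: "real^3"
  assumes "norm u = 1" "norm v = 1" "u \<bullet> v = 0"
  defines "w \<equiv> cross3 u v"
  shows "norm (cross3 (A *\<^sub>R u + B *\<^sub>R (cos t *\<^sub>R v + sin t *\<^sub>R w))
                      (C *\<^sub>R (- sin t *\<^sub>R v + cos t *\<^sub>R w))) = sqrt (A\<^sup>2 + B\<^sup>2) * \<bar>C\<bar>"
proof -
  have uu: "u \<bullet> u = 1" and vv: "v \<bullet> v = 1" using assms by (simp_all add: norm_eq_1)
  have ww: "w \<bullet> w = 1"
    using norm_cross_dot[of u v] assms by (simp add: w_def power2_norm_eq_inner[symmetric])
  have uw: "u \<bullet> w = 0" and vw: "v \<bullet> w = 0"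
    by (simp_all add: w_def dot_cross_self)
  define X where "X = A *\<^sub>R u + B *\<^sub>R (cos t *\<^sub>R v + sin t *\<^sub>R w)"
  define Y where "Y = C *\<^sub>R (- sin t *\<^sub>R v + cos t *\<^sub>R w)"
  have XY: "X \<bullet> Y = 0" and XX: "X \<bullet> X = A\<^sup>2 + B\<^sup>2" and YY: "Y \<bullet> Y = C\<^sup>2"
    using uu vv ww uw vw assms(3) sin_cos_squared_add3[of t]
    by (simp_all add: X_def Y_def inner_add_left inner_add_right inner_commute algebra_simps power2_eq_square)
       (simp_all flip: distrib_left)
  have "(norm (cross3 X Y))\<^sup>2 = (sqrt (A\<^sup>2 + B\<^sup>2) * \<bar>C\<bar>)\<^sup>2"
    using norm_cross_dot[of X Y] XY XX YY by (simp add: power_mult_distrib power2_norm_eq_inner)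
  then show ?thesis
    unfolding X_def Y_def by (rule power2_eq_imp_eq) simp_all
qed

definition axis_normal :: "real \<Rightarrow> real^3" where
  "axis_normal m = (1 / sqrt (1 + m\<^sup>2)) *\<^sub>R plane_pt (- m) 1"

lemma sqrt_one_plus_square_mult_self: "sqrt (1 + m\<^sup>2) * sqrt (1 + m\<^sup>2) = 1 + m\<^sup>2"
  by (simp add: add_nonneg_nonneg)

lemma one_plus_square_nonzero: "1 + m\<^sup>2 \<noteq> (0::real)"
  using add_pos_nonneg[of 1 "m\<^sup>2"] by simp

lemma
  shows norm_line_dir: "norm (line_dir m) = 1"
    and norm_axis_normal: "norm (axis_normal m) = 1"
    and line_dir_inner_axis_normal: "line_dir m \<bullet> axis_normal m = 0"
proof -
  show "norm (line_dir m) = 1" "norm (axis_normal m) = 1"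
    using one_plus_square_nonzero[of m]
    by (simp_all add: line_dir_def axis_normal_def plane_pt_def norm_eq_sqrt_inner inner_vec_def
        sum_3 sqrt_one_plus_square_mult_self divide_simps) (simp_all add: power2_eq_square)
  show "line_dir m \<bullet> axis_normal m = 0"
    by (simp add: line_dir_def axis_normal_def plane_pt_def inner_vec_def sum_3)
qed

lemma plane_pt_axis_coordinates:
  "plane_pt x y = line_point m k + ((x + m * (y - k)) / sqrt (1 + m\<^sup>2)) *\<^sub>R line_dir m
                                 + ((y - m * x - k) / sqrt (1 + m\<^sup>2)) *\<^sub>R axis_normal m"
  using one_plus_square_nonzero[of m]
  by (simp add: line_point_def line_dir_def axis_normal_def plane_pt_def vec_eq_iff forall_3
      sqrt_one_plus_square_mult_self divide_simps) (simp add: algebra_simps power2_eq_square)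

lemma revolution_surface_cylindrical:
  "revolution_surface f m k x t = line_point m k
     + ((x + m * (f x - k)) / sqrt (1 + m\<^sup>2)) *\<^sub>R line_dir m
     + ((f x - m * x - k) / sqrt (1 + m\<^sup>2)) *\<^sub>R
         (cos t *\<^sub>R axis_normal m + sin t *\<^sub>R cross3 (line_dir m) (axis_normal m))"
  unfolding revolution_surface_def plane_pt_axis_coordinates[of x "f x" m k] add.assoc
  by (rule rotate_about_cylindrical[unfolded add.assoc])
     (simp_all add: line_dir_inner_axis_normal norm_line_dir flip: norm_eq_1)

lemma revolution_surface_area_element:
  fixes f :: "real \<Rightarrow> real"
  assumes f: "(f has_real_derivative p) (at x within {a..b})"
    and x: "a < b" "x \<in> {a..b}" and t: "c < d" "t \<in> {c..d}"
  shows "norm (cross3 (vector_derivative (\<lambda>s. revolution_surface f m k s t) (at x within {a..b}))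
                      (vector_derivative (\<lambda>\<tau>. revolution_surface f m k x \<tau>) (at t within {c..d})))
           = \<bar>f x - m * x - k\<bar> * sqrt ((1 + p\<^sup>2) / (1 + m\<^sup>2))"
proof -
  define r where "r = sqrt (1 + m\<^sup>2)"
  define u where "u = line_dir m"
  define v where "v = axis_normal m"
  define w where "w = cross3 u v"
  have r: "r \<noteq> 0" "r\<^sup>2 = 1 + m\<^sup>2"
    using one_plus_square_nonzero[of m] by (simp_all add: r_def add_nonneg_nonneg)
  have surface: "revolution_surface f m k = (\<lambda>s \<tau>. line_point m k
      + ((s + m * (f s - k)) / r) *\<^sub>R u + ((f s - m * s - k) / r) *\<^sub>R (cos \<tau> *\<^sub>R v + sin \<tau> *\<^sub>R w))"
    by (intro ext) (simp add: revolution_surface_cylindrical r_def u_def v_def w_def)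
  have "((\<lambda>s. revolution_surface f m k s t) has_vector_derivative
          ((1 + m * p) / r) *\<^sub>R u + ((p - m) / r) *\<^sub>R (cos t *\<^sub>R v + sin t *\<^sub>R w)) (at x within {a..b})"
    unfolding surface using f r(1)
    by (auto intro!: derivative_eq_intros simp: has_real_derivative_iff_has_vector_derivative)
  then have dx: "vector_derivative (\<lambda>s. revolution_surface f m k s t) (at x within {a..b})
      = ((1 + m * p) / r) *\<^sub>R u + ((p - m) / r) *\<^sub>R (cos t *\<^sub>R v + sin t *\<^sub>R w)"
    by (rule vector_derivative_within_closed_interval[OF x])
  have "((\<lambda>\<tau>. revolution_surface f m k x \<tau>) has_vector_derivative
          ((f x - m * x - k) / r) *\<^sub>R (- sin t *\<^sub>R v + cos t *\<^sub>R w)) (at t within {c..d})"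
    unfolding surface by (auto intro!: derivative_eq_intros)
  then have dt: "vector_derivative (\<lambda>\<tau>. revolution_surface f m k x \<tau>) (at t within {c..d})
      = ((f x - m * x - k) / r) *\<^sub>R (- sin t *\<^sub>R v + cos t *\<^sub>R w)"
    by (rule vector_derivative_within_closed_interval[OF t])
  have "((1 + m * p) / r)\<^sup>2 + ((p - m) / r)\<^sup>2 = 1 + p\<^sup>2"
    using one_plus_square_nonzero[of m]
    by (simp add: power_divide r(2) divide_simps) (simp add: algebra_simps power2_eq_square)
  then have "norm (cross3 (((1 + m * p) / r) *\<^sub>R u + ((p - m) / r) *\<^sub>R (cos t *\<^sub>R v + sin t *\<^sub>R w))
                          (((f x - m * x - k) / r) *\<^sub>R (- sin t *\<^sub>R v + cos t *\<^sub>R w)))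
      = sqrt (1 + p\<^sup>2) * \<bar>(f x - m * x - k) / r\<bar>"
    unfolding w_def u_def v_def
    by (subst norm_cross3_orthonormal_frame)
       (simp_all add: norm_line_dir norm_axis_normal line_dir_inner_axis_normal)
  also have "\<dots> = \<bar>f x - m * x - k\<bar> * sqrt ((1 + p\<^sup>2) / (1 + m\<^sup>2))"
    by (simp add: real_sqrt_divide r_def abs_div)
  finally show ?thesis
    unfolding dx dt .
qed

lemma has_real_derivative_vector_derivative_within:
  assumes "f differentiable_on S" "x \<in> S"
  shows "(f has_real_derivative vector_derivative f (at x within S)) (at x within S)"
  using assms unfolding differentiable_on_def
  by (simp add: vector_derivative_works has_real_derivative_iff_has_vector_derivative)

lemma borel_measurable_vector_derivative_within_interval:
  fixes f :: "real \<Rightarrow> real"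
  assumes f: "f differentiable_on {a..b}"
  shows "(\<lambda>x. vector_derivative f (at x within {a..b})) \<in> borel_measurable (restrict_space borel {a..b})"
proof (cases "a < b")
  case True
  \<comment> \<open>g extends f continuously to the line; the steps h n x point into [a,b], also at b\<close>
  define g where "g x = f (max a (min b x))" for x
  define h where "h n x = (if x < b then b - x else a - b) / real (Suc n)" for n x
  define D where "D x = lim (\<lambda>n. (g (x + h n x) - g x) / h n x)" for x
  have "continuous_on {a..b} f"
    using f by (rule differentiable_imp_continuous_on)
  then have "continuous_on UNIV g"
    unfolding g_def using True
    by (intro continuous_on_compose2[of "{a..b}" f UNIV "\<lambda>x. max a (min b x)"]) (auto intro!: continuous_intros)
  then have [measurable]: "g \<in> borel_measurable borel"
    by (rule borel_measurable_continuous_onI)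
  have "D \<in> borel_measurable borel"
    unfolding D_def h_def by measurable
  moreover have "D x = vector_derivative f (at x within {a..b})" if x: "x \<in> {a..b}" for x
  proof -
    define p where "p = vector_derivative f (at x within {a..b})"
    have "(f has_real_derivative p) (at x within {a..b})"
      unfolding p_def using f x by (rule has_real_derivative_vector_derivative_within)
    then have quotient: "((\<lambda>y. (f y - f x) / (y - x)) \<longlongrightarrow> p) (at x within {a..b})"
      by (simp add: has_field_derivative_iff)
    have h_ne: "h n x \<noteq> 0" and h_in: "x + h n x \<in> {a..b}" for n
      using True x mult_right_mono[of a x "real n"] mult_right_mono[of x b "real n"]
        mult_right_mono[of a b "real n"]
      by (auto simp: h_def field_simps)
    have "(\<lambda>n. x + h n x) \<longlonglongrightarrow> x + (if x < b then b - x else a - b) * 0"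
      unfolding h_def divide_inverse by (intro tendsto_intros LIMSEQ_inverse_real_of_nat)
    then have "filterlim (\<lambda>n. x + h n x) (at x within {a..b}) sequentially"
      using h_ne h_in by (simp add: filterlim_at)
    from filterlim_compose[OF quotient this]
    have "(\<lambda>n. (g (x + h n x) - g x) / h n x) \<longlonglongrightarrow> p"
      using h_in x by (simp add: g_def)
    then show ?thesis
      unfolding D_def p_def by (rule limI)
  qed
  ultimately show ?thesis
    by (subst measurable_cong[where g = D]) (auto intro: measurable_restrict_space1)
next
  case False
  then have "x = a" if "x \<in> {a..b}" for x
    using that by auto
  then show ?thesis
    by (subst measurable_cong[where g = "\<lambda>_. vector_derivative f (at a within {a..b})"]) auto
qed

lemma integral_eq_enn2real_set_nn_integral:
  fixes G :: "'a::euclidean_space \<Rightarrow> real"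
  assumes G: "set_borel_measurable borel S G" and nonneg: "\<And>x. x \<in> S \<Longrightarrow> 0 \<le> G x"
  shows "integral S G = enn2real (\<integral>\<^sup>+x\<in>S. G x \<partial>lborel)"
proof -
  define F where "F = (\<lambda>x. indicator S x * G x)"
  have F: "F \<in> borel_measurable borel" "\<And>x. 0 \<le> F x"
    using G nonneg by (simp_all add: F_def set_borel_measurable_def split: split_indicator)
  have "integral S G = integral UNIV F"
    unfolding integral_restrict_UNIV[symmetric, of S G] F_def
    by (auto intro!: arg_cong[where f = "integral UNIV"] split: split_indicator)
  moreover have "(\<integral>\<^sup>+x\<in>S. G x \<partial>lborel) = integral\<^sup>N lborel F"
    by (auto simp: F_def intro!: nn_integral_cong split: split_indicator)
  moreover have "integral UNIV F = enn2real (integral\<^sup>N lborel F)"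
  proof (cases "integral\<^sup>N lborel F = \<infinity>")
    case True
    have "\<not> F integrable_on UNIV"
    proof
      assume "F integrable_on UNIV"
      then have "integral\<^sup>N lborel F = integral UNIV F"
        by (intro nn_integral_has_integral_lborel[OF F] integrable_integral)
      with True show False by simp
    qed
    with True show ?thesis
      by (simp add: not_integrable_integral)
  next
    case False
    then obtain r where r: "integral\<^sup>N lborel F = ennreal r" "0 \<le> r"
      by (cases "integral\<^sup>N lborel F" rule: ennreal_cases) auto
    then show ?thesis
      using nn_integral_has_integral[OF F r] by (simp add: integral_unique)
  qed
  ultimately show ?thesis by simp
qed

lemma integral_Times_fst:
  fixes G :: "'a::euclidean_space \<Rightarrow> real" and T :: "'b::euclidean_space set"
  assumes G: "set_borel_measurable borel S G" and nonneg: "\<And>x. x \<in> S \<Longrightarrow> 0 \<le> G x"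
    and T: "T \<in> sets borel"
  shows "integral (S \<times> T) (\<lambda>z. G (fst z)) = measure lborel T * integral S G"
proof -
  define F where "F = (\<lambda>x. indicator S x * G x)"
  have F: "F \<in> borel_measurable borel" "\<And>x. 0 \<le> F x"
    using G nonneg by (simp_all add: F_def set_borel_measurable_def split: split_indicator)
  have FT: "(\<lambda>z. F (fst z) * indicator T (snd z)) \<in> borel_measurable (lborel \<Otimes>\<^sub>M lborel)"
    using F(1) T by measurable
  then have GT: "set_borel_measurable borel (S \<times> T) (\<lambda>z. G (fst z))"
    by (simp add: set_borel_measurable_def lborel_prod F_def indicator_times mult_ac)
  have "(\<integral>\<^sup>+z\<in>S \<times> T. G (fst z) \<partial>lborel)
      = (\<integral>\<^sup>+z. ennreal (F (fst z) * indicator T (snd z)) \<partial>(lborel \<Otimes>\<^sub>M lborel))"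
    by (auto simp: lborel_prod F_def indicator_times intro!: nn_integral_cong split: split_indicator)
  also have "\<dots> = (\<integral>\<^sup>+x. \<integral>\<^sup>+y. ennreal (F x * indicator T y) \<partial>lborel \<partial>lborel)"
    using lborel.nn_integral_fst[of "\<lambda>z. ennreal (F (fst z) * indicator T (snd z))"] FT by simp
  also have "\<dots> = (\<integral>\<^sup>+x. ennreal (F x) * emeasure lborel T \<partial>lborel)"
    using F(2) T by (simp add: ennreal_mult' ennreal_indicator nn_integral_cmult_indicator)
  also have "\<dots> = (\<integral>\<^sup>+x. ennreal (F x) \<partial>lborel) * emeasure lborel T"
    using F(1) by (intro nn_integral_multc) measurable
  also have "(\<integral>\<^sup>+x. ennreal (F x) \<partial>lborel) = (\<integral>\<^sup>+x\<in>S. G x \<partial>lborel)"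
    by (auto simp: F_def intro!: nn_integral_cong split: split_indicator)
  finally have nn: "(\<integral>\<^sup>+z\<in>S \<times> T. G (fst z) \<partial>lborel) = (\<integral>\<^sup>+x\<in>S. G x \<partial>lborel) * emeasure lborel T" .
  have "integral (S \<times> T) (\<lambda>z. G (fst z)) = enn2real (\<integral>\<^sup>+z\<in>S \<times> T. G (fst z) \<partial>lborel)"
    using nonneg by (intro integral_eq_enn2real_set_nn_integral[OF GT]) auto
  then show ?thesis
    using integral_eq_enn2real_set_nn_integral[OF G nonneg]
    by (simp add: nn enn2real_mult measure_def)
qed

lemma param_surface_area_degenerate:
  assumes "b \<le> a"
  shows "param_surface_area phi a b c d = 0"
proof -
  have "measure lborel (cbox (a, c) (b, d)) = 0"
    using assms by (simp add: content_Pair)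
  from integral_null[OF this, unfolded cbox_Pair_eq] show ?thesis
    unfolding param_surface_area_def by simp
qed

theorem mainTheorem2:
  fixes f :: "real \<Rightarrow> real" and a b m k :: real
  assumes "f differentiable_on {a..b}"
  shows "param_surface_area (revolution_surface f m k) a b 0 (2 * pi) =
    2 * pi * integral {a..b}
      (\<lambda>x. \<bar>f x - m * x - k\<bar> *
           sqrt ((1 + (vector_derivative f (at x within {a..b}))\<^sup>2) / (1 + m\<^sup>2)))"
proof (cases "a < b")
  case True
  define g where "g = (\<lambda>x. \<bar>f x - m * x - k\<bar> *
    sqrt ((1 + (vector_derivative f (at x within {a..b}))\<^sup>2) / (1 + m\<^sup>2)))"
  have "param_surface_area (revolution_surface f m k) a b 0 (2 * pi)
      = integral ({a..b} \<times> {0..2 * pi}) (\<lambda>z. g (fst z))"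
    unfolding param_surface_area_def g_def using True
    by (intro integral_cong)
       (auto intro!: revolution_surface_area_element has_real_derivative_vector_derivative_within[OF assms])
  also have "\<dots> = measure lborel {0..2 * pi} * integral {a..b} g"
  proof (rule integral_Times_fst)
    have "continuous_on {a..b} f"
      using assms by (rule differentiable_imp_continuous_on)
    then have "g \<in> borel_measurable (restrict_space borel {a..b})"
      unfolding g_def
      using borel_measurable_continuous_on_restrict borel_measurable_vector_derivative_within_interval[OF assms]
      by measurable
    then show "set_borel_measurable borel {a..b} g"
      by (simp add: set_borel_measurable_def borel_measurable_restrict_space_iff)
  qed (simp_all add: g_def)
  finally show ?thesis
    by (simp add: g_def)
next
  case False
  then show ?thesis
    by (cases "a = b") (simp_all add: param_surface_area_degenerate)
qed

end
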